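(* For every skew brace $A$, the space $\mathrm{Spec}\,A$ with the spectral topology is a $T_0$-space.
   Context: A (left) skew brace is a triple $(A,+,\circ)$ where $(A,+)$ and $(A,\circ)$ are groups such that $a\circ(b+c)=a\circ b-a+a\circ c$ for all $a,b,c$; common identity $e$. Put $\lambda_a(b)=-a+a\circ b$ and $a*b=-a+a\circ b-b$. An ideal is a normal subgroup $I$ of both $(A,+)$ and $(A,\circ)$ with $\lambda_a(I)\subseteq I$ for all $a$. A prime ideal is a proper ideal $P$ such that for any subsets $X,Y$ of $A$, $\{x*y\mid x\in X,y\in Y\}\subseteq P$ implies $X\subseteq P$ or $Y\subseteq P$; $\mathrm{Spec}\,A$ is the set of prime ideals. The spectral topology has closed sets $H(I)=\{P\in\mathrm{Spec}\,A\mid I\subseteq P\}$, $I$ an ideal. *)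

theory Defs
  imports "HOL-Algebra.Coset" "HOL-Analysis.Abstract_Topological_Spaces"
begin

definition add_grp :: "'a set \<Rightarrow> ('a \<Rightarrow> 'a \<Rightarrow> 'a) \<Rightarrow> 'a \<Rightarrow> 'a monoid" where
  "add_grp A add e = \<lparr>carrier = A, mult = add, one = e\<rparr>"

definition circ_grp :: "'a set \<Rightarrow> ('a \<Rightarrow> 'a \<Rightarrow> 'a) \<Rightarrow> 'a \<Rightarrow> 'a monoid" where
  "circ_grp A circ e = \<lparr>carrier = A, mult = circ, one = e\<rparr>"

definition skew_brace :: "'a set \<Rightarrow> ('a \<Rightarrow> 'a \<Rightarrow> 'a) \<Rightarrow> ('a \<Rightarrow> 'a \<Rightarrow> 'a) \<Rightarrow> 'a \<Rightarrow> bool" where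
  "skew_brace A add circ e \<longleftrightarrow>
     group (add_grp A add e) \<and> group (circ_grp A circ e) \<and>
     (\<forall>a\<in>A. \<forall>b\<in>A. \<forall>c\<in>A.
        circ a (add b c) = add (add (circ a b) (inv\<^bsub>add_grp A add e\<^esub> a)) (circ a c))"

definition brace_lambda :: "'a set \<Rightarrow> ('a \<Rightarrow> 'a \<Rightarrow> 'a) \<Rightarrow> ('a \<Rightarrow> 'a \<Rightarrow> 'a) \<Rightarrow> 'a \<Rightarrow> 'a \<Rightarrow> 'a \<Rightarrow> 'a" where
  "brace_lambda A add circ e a b = add (inv\<^bsub>add_grp A add e\<^esub> a) (circ a b)"

definition brace_star :: "'a set \<Rightarrow> ('a \<Rightarrow> 'a \<Rightarrow> 'a) \<Rightarrow> ('a \<Rightarrow> 'a \<Rightarrow> 'a) \<Rightarrow> 'a \<Rightarrow> 'a \<Rightarrow> 'a \<Rightarrow> 'a" where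
  "brace_star A add circ e a b =
     add (add (inv\<^bsub>add_grp A add e\<^esub> a) (circ a b)) (inv\<^bsub>add_grp A add e\<^esub> b)"

definition brace_ideal :: "'a set \<Rightarrow> ('a \<Rightarrow> 'a \<Rightarrow> 'a) \<Rightarrow> ('a \<Rightarrow> 'a \<Rightarrow> 'a) \<Rightarrow> 'a \<Rightarrow> 'a set \<Rightarrow> bool" where
  "brace_ideal A add circ e I \<longleftrightarrow>
     normal I (add_grp A add e) \<and> normal I (circ_grp A circ e) \<and>
     (\<forall>a\<in>A. brace_lambda A add circ e a ` I \<subseteq> I)"

definition brace_prime_ideal :: "'a set \<Rightarrow> ('a \<Rightarrow> 'a \<Rightarrow> 'a) \<Rightarrow> ('a \<Rightarrow> 'a \<Rightarrow> 'a) \<Rightarrow> 'a \<Rightarrow> 'a set \<Rightarrow> bool" where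
  "brace_prime_ideal A add circ e P \<longleftrightarrow>
     brace_ideal A add circ e P \<and> P \<noteq> A \<and>
     (\<forall>X Y. X \<subseteq> A \<longrightarrow> Y \<subseteq> A \<longrightarrow>
        {brace_star A add circ e x y | x y. x \<in> X \<and> y \<in> Y} \<subseteq> P \<longrightarrow> X \<subseteq> P \<or> Y \<subseteq> P)"

definition brace_Spec :: "'a set \<Rightarrow> ('a \<Rightarrow> 'a \<Rightarrow> 'a) \<Rightarrow> ('a \<Rightarrow> 'a \<Rightarrow> 'a) \<Rightarrow> 'a \<Rightarrow> 'a set set" where
  "brace_Spec A add circ e = {P. brace_prime_ideal A add circ e P}"

definition brace_H :: "'a set \<Rightarrow> ('a \<Rightarrow> 'a \<Rightarrow> 'a) \<Rightarrow> ('a \<Rightarrow> 'a \<Rightarrow> 'a) \<Rightarrow> 'a \<Rightarrow> 'a set \<Rightarrow> 'a set set" where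
  "brace_H A add circ e I = {P \<in> brace_Spec A add circ e. I \<subseteq> P}"

definition spectral_topology :: "'a set \<Rightarrow> ('a \<Rightarrow> 'a \<Rightarrow> 'a) \<Rightarrow> ('a \<Rightarrow> 'a \<Rightarrow> 'a) \<Rightarrow> 'a \<Rightarrow> 'a set topology" where
  "spectral_topology A add circ e = topology (\<lambda>U. \<exists>I. brace_ideal A add circ e I \<and>
       U = brace_Spec A add circ e - brace_H A add circ e I)"

end

theory Submission
  imports Defs
begin

text \<open>
  For ideals \<open>I\<close> and \<open>J\<close> one has \<open>I * J \<subseteq> I \<inter> J\<close>: if \<open>y \<in> J\<close> then
  \<open>x * y = \<lambda>\<^sub>x(y) - y \<in> J\<close>, and if \<open>x \<in> I\<close> then writing \<open>x \<circ> y = y \<circ> x'\<close> with the conjugate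
  \<open>x' \<in> I\<close> gives \<open>x * y = -x + (y + \<lambda>\<^sub>y(x')) - y \<in> I\<close>. Hence a prime containing \<open>I \<inter> J\<close>
  contains \<open>I\<close> or \<open>J\<close>, i.e. \<open>H(I \<inter> J) = H(I) \<union> H(J)\<close>; as also \<open>\<Inter>\<^sub>k H(I\<^sub>k)\<close> is \<open>H\<close> of the
  ideal generated by \<open>\<Union>\<^sub>k I\<^sub>k\<close>, the complements of the sets \<open>H(I)\<close> are exactly the open sets
  of a topology on \<open>Spec A\<close>. Of two distinct primes, one, say \<open>P\<close>, is not contained in the
  other, \<open>Q\<close>; then the open set \<open>Spec A - H(P)\<close> contains \<open>Q\<close> but not \<open>P\<close>.
\<close>

lemma (in group) normal_self: "carrier G \<lhd> G"
  by (simp add: normal_invI subgroup_self)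

lemma (in group) normal_Inter:
  assumes "\<And>H. H \<in> S \<Longrightarrow> H \<lhd> G" and "S \<noteq> {}"
  shows "\<Inter>S \<lhd> G"
  using assms subgroups_Inter[of S] by (auto simp: normal_inv_iff)

lemma add_grp_simps [simp]:
  "carrier (add_grp A add e) = A" "mult (add_grp A add e) = add" "one (add_grp A add e) = e"
  by (simp_all add: add_grp_def)

lemma circ_grp_simps [simp]:
  "carrier (circ_grp A circ e) = A" "mult (circ_grp A circ e) = circ" "one (circ_grp A circ e) = e"
  by (simp_all add: circ_grp_def)

lemma brace_ideal_subset: "brace_ideal A add circ e I \<Longrightarrow> I \<subseteq> A"
  using subgroup.subset[OF normal_imp_subgroup, of I "add_grp A add e"]
  by (simp add: brace_ideal_def)

lemma brace_ideal_add_closed: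
  "brace_ideal A add circ e I \<Longrightarrow> a \<in> I \<Longrightarrow> b \<in> I \<Longrightarrow> add a b \<in> I"
  using subgroup.m_closed[OF normal_imp_subgroup, of I "add_grp A add e" a b]
  by (simp add: brace_ideal_def)

lemma brace_ideal_add_inv_closed:
  "brace_ideal A add circ e I \<Longrightarrow> a \<in> I \<Longrightarrow> inv\<^bsub>add_grp A add e\<^esub> a \<in> I"
  using subgroup.m_inv_closed[OF normal_imp_subgroup, of I "add_grp A add e" a]
  by (simp add: brace_ideal_def)

lemma brace_ideal_lambda_closed:
  "brace_ideal A add circ e I \<Longrightarrow> a \<in> A \<Longrightarrow> b \<in> I \<Longrightarrow> brace_lambda A add circ e a b \<in> I"
  unfolding brace_ideal_def by blast

lemma brace_star_eq_lambda:
  "brace_star A add circ e a b = add (brace_lambda A add circ e a b) (inv\<^bsub>add_grp A add e\<^esub> b)"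
  by (simp add: brace_star_def brace_lambda_def)

lemma brace_Spec_ideal: "P \<in> brace_Spec A add circ e \<Longrightarrow> brace_ideal A add circ e P"
  by (simp add: brace_Spec_def brace_prime_ideal_def)

lemma brace_prime_idealD:
  assumes "brace_prime_ideal A add circ e P" and "X \<subseteq> A" and "Y \<subseteq> A"
    and "{brace_star A add circ e x y | x y. x \<in> X \<and> y \<in> Y} \<subseteq> P"
  shows "X \<subseteq> P \<or> Y \<subseteq> P"
  using assms unfolding brace_prime_ideal_def by blast

lemma brace_Spec_psubset:
  assumes "P \<in> brace_Spec A add circ e"
  shows "P \<subset> A"
proof -
  have "P \<noteq> A"
    using assms by (simp add: brace_Spec_def brace_prime_ideal_def)
  with brace_ideal_subset[OF brace_Spec_ideal[OF assms]] show ?thesis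
    by blast
qed

definition brace_ideal_span ::
    "'a set \<Rightarrow> ('a \<Rightarrow> 'a \<Rightarrow> 'a) \<Rightarrow> ('a \<Rightarrow> 'a \<Rightarrow> 'a) \<Rightarrow> 'a \<Rightarrow> 'a set \<Rightarrow> 'a set" where
  "brace_ideal_span A add circ e S = \<Inter>{J. brace_ideal A add circ e J \<and> S \<subseteq> J}"

lemma brace_ideal_span_superset: "S \<subseteq> brace_ideal_span A add circ e S"
  unfolding brace_ideal_span_def by blast

lemma brace_ideal_span_least:
  "brace_ideal A add circ e J \<Longrightarrow> S \<subseteq> J \<Longrightarrow> brace_ideal_span A add circ e S \<subseteq> J"
  unfolding brace_ideal_span_def by blast

lemma brace_H_ideal_span:
  "brace_H A add circ e (brace_ideal_span A add circ e S) = brace_H A add circ e S"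
  using brace_ideal_span_superset[of S A add circ e] brace_ideal_span_least[of A add circ e _ S]
    brace_Spec_ideal[of _ A add circ e]
  unfolding brace_H_def by blast

lemma brace_H_Union:
  "brace_Spec A add circ e - brace_H A add circ e (\<Union>\<I>)
     = (\<Union>I\<in>\<I>. brace_Spec A add circ e - brace_H A add circ e I)"
  unfolding brace_H_def by blast

lemma brace_H_carrier: "brace_H A add circ e A = {}"
  unfolding brace_H_def by (auto dest: brace_Spec_psubset)

text \<open>Only the two group structures are needed.\<close>

locale brace_groups =
  fixes A :: "'a set" and add circ :: "'a \<Rightarrow> 'a \<Rightarrow> 'a" and e :: 'a
  assumes add_group: "group (add_grp A add e)"
    and circ_group: "group (circ_grp A circ e)"
begin

sublocale add: group "add_grp A add e" by (rule add_group)
sublocale circ: group "circ_grp A circ e" by (rule circ_group)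

lemmas add_closed [simp] = add.m_closed[simplified] add.inv_closed[simplified]
lemmas circ_closed [simp] = circ.m_closed[simplified] circ.inv_closed[simplified]

lemma brace_ideal_carrier: "brace_ideal A add circ e A"
  unfolding brace_ideal_def brace_lambda_def
  using add.normal_self circ.normal_self by auto

lemma brace_ideal_Inter:
  assumes "\<And>I. I \<in> \<I> \<Longrightarrow> brace_ideal A add circ e I" and "\<I> \<noteq> {}"
  shows "brace_ideal A add circ e (\<Inter>\<I>)"
proof -
  have "\<Inter>\<I> \<lhd> add_grp A add e" and "\<Inter>\<I> \<lhd> circ_grp A circ e"
    using assms add.normal_Inter[of \<I>] circ.normal_Inter[of \<I>]
    by (simp_all add: brace_ideal_def)
  moreover have "brace_lambda A add circ e a ` \<Inter>\<I> \<subseteq> \<Inter>\<I>" if "a \<in> A" for a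
    using assms(1) that unfolding brace_ideal_def by blast
  ultimately show ?thesis
    unfolding brace_ideal_def by blast
qed

lemma brace_ideal_Int:
  assumes "brace_ideal A add circ e I" and "brace_ideal A add circ e J"
  shows "brace_ideal A add circ e (I \<inter> J)"
proof -
  have "brace_ideal A add circ e (\<Inter>{I, J})"
    by (rule brace_ideal_Inter) (use assms in auto)
  then show ?thesis by simp
qed

lemma brace_ideal_span:
  assumes "S \<subseteq> A"
  shows "brace_ideal A add circ e (brace_ideal_span A add circ e S)"
  unfolding brace_ideal_span_def
  using assms brace_ideal_carrier by (intro brace_ideal_Inter) auto

lemma brace_star_mem_right:
  assumes J: "brace_ideal A add circ e J" and "x \<in> A" and "y \<in> J"
  shows "brace_star A add circ e x y \<in> J"
  unfolding brace_star_eq_lambda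
  using assms
  by (intro brace_ideal_add_closed[OF J] brace_ideal_add_inv_closed[OF J] brace_ideal_lambda_closed[OF J])

lemma brace_star_mem_left:
  assumes I: "brace_ideal A add circ e I" and "x \<in> I" and "y \<in> A"
  shows "brace_star A add circ e x y \<in> I"
proof -
  have "I \<subseteq> A" using I by (rule brace_ideal_subset)
  with \<open>x \<in> I\<close> have "x \<in> A" by blast
  have add_normal: "I \<lhd> add_grp A add e" and circ_normal: "I \<lhd> circ_grp A circ e"
    using I by (simp_all add: brace_ideal_def)
  define x' where "x' = circ (circ (inv\<^bsub>circ_grp A circ e\<^esub> y) x) y"
  have "x' \<in> I"
    unfolding x'_def using normal.inv_op_closed1[OF circ_normal, of y x] \<open>x \<in> I\<close> \<open>y \<in> A\<close>
    by simp
  with \<open>I \<subseteq> A\<close> have "x' \<in> A" by blast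
  have circ_conjugate: "circ x y = circ y x'"
    unfolding x'_def using \<open>x \<in> A\<close> \<open>y \<in> A\<close>
    by (simp add: circ.m_assoc[symmetric, simplified] circ.r_inv[simplified] circ.l_one[simplified])
  define l where "l = brace_lambda A add circ e y x'"
  have "l \<in> I"
    unfolding l_def using \<open>y \<in> A\<close> \<open>x' \<in> I\<close> by (rule brace_ideal_lambda_closed[OF I])
  with \<open>I \<subseteq> A\<close> have "l \<in> A" by blast
  have "circ y x' = add y l"
    unfolding l_def brace_lambda_def using \<open>y \<in> A\<close> \<open>x' \<in> A\<close>
    by (simp add: add.m_assoc[symmetric, simplified] add.r_inv[simplified] add.l_one[simplified])
  then have star: "brace_star A add circ e x y
      = add (inv\<^bsub>add_grp A add e\<^esub> x) (add (add y l) (inv\<^bsub>add_grp A add e\<^esub> y))"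
    unfolding brace_star_def circ_conjugate using \<open>x \<in> A\<close> \<open>y \<in> A\<close> \<open>l \<in> A\<close>
    by (simp add: add.m_assoc[simplified])
  have "add (add y l) (inv\<^bsub>add_grp A add e\<^esub> y) \<in> I"
    using normal.inv_op_closed2[OF add_normal, of y l] \<open>y \<in> A\<close> \<open>l \<in> I\<close> by simp
  then show ?thesis
    unfolding star by (rule brace_ideal_add_closed[OF I brace_ideal_add_inv_closed[OF I \<open>x \<in> I\<close>]])
qed

lemma brace_H_Int:
  assumes I: "brace_ideal A add circ e I" and J: "brace_ideal A add circ e J"
  shows "brace_H A add circ e (I \<inter> J) = brace_H A add circ e I \<union> brace_H A add circ e J"
proof
  show "brace_H A add circ e (I \<inter> J) \<subseteq> brace_H A add circ e I \<union> brace_H A add circ e J"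
  proof
    fix P assume P: "P \<in> brace_H A add circ e (I \<inter> J)"
    then have prime: "brace_prime_ideal A add circ e P" and "I \<inter> J \<subseteq> P"
      unfolding brace_H_def brace_Spec_def by auto
    have "I \<subseteq> A" "J \<subseteq> A"
      using I J by (simp_all add: brace_ideal_subset)
    have "brace_star A add circ e x y \<in> I \<inter> J" if "x \<in> I" "y \<in> J" for x y
      using brace_star_mem_left[OF I] brace_star_mem_right[OF J] \<open>I \<subseteq> A\<close> \<open>J \<subseteq> A\<close> that
      by blast
    with \<open>I \<inter> J \<subseteq> P\<close> have "{brace_star A add circ e x y | x y. x \<in> I \<and> y \<in> J} \<subseteq> P"
      by blast
    with prime \<open>I \<subseteq> A\<close> \<open>J \<subseteq> A\<close> have "I \<subseteq> P \<or> J \<subseteq> P"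
      by (rule brace_prime_idealD)
    with P show "P \<in> brace_H A add circ e I \<union> brace_H A add circ e J"
      unfolding brace_H_def by auto
  qed
qed (auto simp: brace_H_def)

lemma openin_spectral_topology:
  "openin (spectral_topology A add circ e) U \<longleftrightarrow>
     (\<exists>I. brace_ideal A add circ e I \<and> U = brace_Spec A add circ e - brace_H A add circ e I)"
proof -
  let ?Spec = "brace_Spec A add circ e" and ?H = "brace_H A add circ e"
    and ?ideal = "brace_ideal A add circ e"
  have "istopology (\<lambda>U. \<exists>I. ?ideal I \<and> U = ?Spec - ?H I)"
    unfolding istopology_def
  proof (intro conjI allI impI)
    fix U V
    assume "\<exists>I. ?ideal I \<and> U = ?Spec - ?H I" and "\<exists>J. ?ideal J \<and> V = ?Spec - ?H J"
    then obtain I J where "?ideal I" "U = ?Spec - ?H I" "?ideal J" "V = ?Spec - ?H J"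
      by blast
    then show "\<exists>K. ?ideal K \<and> U \<inter> V = ?Spec - ?H K"
      by (intro exI[of _ "I \<inter> J"]) (auto simp: brace_ideal_Int brace_H_Int)
  next
    fix \<U> assume "\<forall>U\<in>\<U>. \<exists>I. ?ideal I \<and> U = ?Spec - ?H I"
    then obtain ideal_of where ideal: "\<forall>U\<in>\<U>. ?ideal (ideal_of U)"
      and complement: "\<forall>U\<in>\<U>. ?Spec - ?H (ideal_of U) = U"
      by (metis bchoice)
    define S where "S = \<Union>(ideal_of ` \<U>)"
    have "S \<subseteq> A"
      unfolding S_def using ideal brace_ideal_subset[of A add circ e] by blast
    have "?Spec - ?H (brace_ideal_span A add circ e S) = ?Spec - ?H S"
      by (simp add: brace_H_ideal_span)
    also have "\<dots> = (\<Union>U\<in>\<U>. ?Spec - ?H (ideal_of U))"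
      unfolding S_def brace_H_Union by (simp add: image_image)
    also have "\<dots> = \<Union>\<U>"
      using complement by simp
    finally show "\<exists>K. ?ideal K \<and> \<Union>\<U> = ?Spec - ?H K"
      using brace_ideal_span[OF \<open>S \<subseteq> A\<close>] by blast
  qed
  then show ?thesis
    unfolding spectral_topology_def by simp
qed

lemma topspace_spectral_topology:
  "topspace (spectral_topology A add circ e) = brace_Spec A add circ e"
proof
  show "topspace (spectral_topology A add circ e) \<subseteq> brace_Spec A add circ e"
    unfolding topspace_def openin_spectral_topology by blast
  have "openin (spectral_topology A add circ e) (brace_Spec A add circ e)"
    unfolding openin_spectral_topology
    by (intro exI[of _ A]) (simp add: brace_ideal_carrier brace_H_carrier)
  then show "brace_Spec A add circ e \<subseteq> topspace (spectral_topology A add circ e)"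
    by (rule openin_subset)
qed

end

theorem proposition4p6:
  fixes A :: "'a set" and add circ :: "'a \<Rightarrow> 'a \<Rightarrow> 'a" and e :: 'a
  assumes "skew_brace A add circ e"
  shows "t0_space (spectral_topology A add circ e)"
proof -
  interpret brace_groups A add circ e
    using assms unfolding skew_brace_def brace_groups_def by blast
  have separated: "\<exists>U. openin (spectral_topology A add circ e) U \<and> P \<notin> U \<and> Q \<in> U"
    if "P \<in> brace_Spec A add circ e" "Q \<in> brace_Spec A add circ e" "\<not> P \<subseteq> Q" for P Q
  proof (intro exI conjI)
    show "openin (spectral_topology A add circ e) (brace_Spec A add circ e - brace_H A add circ e P)"
      using brace_Spec_ideal[OF that(1)] by (auto simp: openin_spectral_topology)
    show "P \<notin> brace_Spec A add circ e - brace_H A add circ e P"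
      and "Q \<in> brace_Spec A add circ e - brace_H A add circ e P"
      using that by (auto simp: brace_H_def)
  qed
  show ?thesis
    unfolding t0_space_def topspace_spectral_topology
  proof (intro ballI impI)
    fix P Q assume "P \<in> brace_Spec A add circ e" "Q \<in> brace_Spec A add circ e" "P \<noteq> Q"
    then consider "\<not> P \<subseteq> Q" | "\<not> Q \<subseteq> P" by blast
    then show "\<exists>U. openin (spectral_topology A add circ e) U \<and> (P \<notin> U \<longleftrightarrow> Q \<in> U)"
      by cases (use separated \<open>P \<in> _\<close> \<open>Q \<in> _\<close> in blast)+
  qed
qed

end
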